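(* Let $L$ be a geometric lattice of rank $r+1$ with $n$ atoms. Then for all $S\subseteq[r]$, $h_S(L)\le h_S(\mathscr{B}_{r+1,n})$.
   Context: A geometric lattice is a finite graded atomic lattice whose rank function $\rho$ satisfies $\rho(x\vee y)+\rho(x\wedge y)\le \rho(x)+\rho(y)$. For a graded poset $P$ of rank $r+1$ with $\hat 0,\hat 1$ and $S\subseteq[r]=\{1,\dots,r\}$, $f_S(P)$ is the number of chains in $P$ whose elements have ranks exactly the elements of $S$ (one element of each rank in $S$), and the flag $h$-vector is $h_S(P)=\sum_{T\subseteq S}(-1)^{|S|-|T|}f_T(P)$. The truncated Boolean algebra $\mathscr{B}_{r+1,n}$ ($n\ge r+1$) is the poset consisting of all subsets of $[n]$ of cardinality at most $r$, ordered by inclusion, together with an added maximum element $\hat 1$; it is the rank $r+1$ geometric lattice on $n$ atoms in which every $(r+1)$-subset of atoms is a basis. *)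

theory Defs
  imports Main
begin

definition partial_order_on' :: "'a set \<Rightarrow> ('a \<Rightarrow> 'a \<Rightarrow> bool) \<Rightarrow> bool" where
  "partial_order_on' P le \<longleftrightarrow>
     (\<forall>x\<in>P. le x x) \<and>
     (\<forall>x\<in>P. \<forall>y\<in>P. le x y \<and> le y x \<longrightarrow> x = y) \<and>
     (\<forall>x\<in>P. \<forall>y\<in>P. \<forall>z\<in>P. le x y \<and> le y z \<longrightarrow> le x z)"

definition is_chain :: "'a set \<Rightarrow> ('a \<Rightarrow> 'a \<Rightarrow> bool) \<Rightarrow> 'a set \<Rightarrow> bool" where
  "is_chain P le C \<longleftrightarrow> C \<subseteq> P \<and> (\<forall>x\<in>C. \<forall>y\<in>C. le x y \<or> le y x)"

definition height :: "'a set \<Rightarrow> ('a \<Rightarrow> 'a \<Rightarrow> bool) \<Rightarrow> 'a \<Rightarrow> nat" where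
  "height P le x = Max {card C | C. is_chain P le C \<and> (\<forall>c\<in>C. le c x)} - 1"

definition covers :: "'a set \<Rightarrow> ('a \<Rightarrow> 'a \<Rightarrow> bool) \<Rightarrow> 'a \<Rightarrow> 'a \<Rightarrow> bool" where
  "covers P le x y \<longleftrightarrow> x \<in> P \<and> y \<in> P \<and> le x y \<and> x \<noteq> y \<and>
     \<not> (\<exists>z\<in>P. le x z \<and> le z y \<and> z \<noteq> x \<and> z \<noteq> y)"

text \<open>Finite graded poset with \<open>\<hat>0\<close> and \<open>\<hat>1\<close>: the height function is a rank function
  (increases by exactly one along every cover relation), equivalently all maximal chains
  have the same length.\<close>
definition graded_poset :: "'a set \<Rightarrow> ('a \<Rightarrow> 'a \<Rightarrow> bool) \<Rightarrow> bool" where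
  "graded_poset P le \<longleftrightarrow> finite P \<and> partial_order_on' P le \<and>
     (\<exists>b\<in>P. \<forall>x\<in>P. le b x) \<and> (\<exists>t\<in>P. \<forall>x\<in>P. le x t) \<and>
     (\<forall>x y. covers P le x y \<longrightarrow> height P le y = height P le x + 1)"

definition poset_rank :: "'a set \<Rightarrow> ('a \<Rightarrow> 'a \<Rightarrow> bool) \<Rightarrow> nat" where
  "poset_rank P le = Max (height P le ` P)"

definition is_lub :: "'a set \<Rightarrow> ('a \<Rightarrow> 'a \<Rightarrow> bool) \<Rightarrow> 'a set \<Rightarrow> 'a \<Rightarrow> bool" where
  "is_lub P le A x \<longleftrightarrow> x \<in> P \<and> (\<forall>a\<in>A. le a x) \<and> (\<forall>y\<in>P. (\<forall>a\<in>A. le a y) \<longrightarrow> le x y)"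

definition is_glb :: "'a set \<Rightarrow> ('a \<Rightarrow> 'a \<Rightarrow> bool) \<Rightarrow> 'a set \<Rightarrow> 'a \<Rightarrow> bool" where
  "is_glb P le A x \<longleftrightarrow> x \<in> P \<and> (\<forall>a\<in>A. le x a) \<and> (\<forall>y\<in>P. (\<forall>a\<in>A. le y a) \<longrightarrow> le y x)"

definition is_lattice :: "'a set \<Rightarrow> ('a \<Rightarrow> 'a \<Rightarrow> bool) \<Rightarrow> bool" where
  "is_lattice P le \<longleftrightarrow> (\<forall>x\<in>P. \<forall>y\<in>P. (\<exists>j. is_lub P le {x, y} j) \<and> (\<exists>m. is_glb P le {x, y} m))"

definition atoms :: "'a set \<Rightarrow> ('a \<Rightarrow> 'a \<Rightarrow> bool) \<Rightarrow> 'a set" where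
  "atoms P le = {a \<in> P. height P le a = 1}"

definition atomic :: "'a set \<Rightarrow> ('a \<Rightarrow> 'a \<Rightarrow> bool) \<Rightarrow> bool" where
  "atomic P le \<longleftrightarrow> (\<forall>x\<in>P. is_lub P le {a \<in> atoms P le. le a x} x)"

definition geometric_lattice :: "'a set \<Rightarrow> ('a \<Rightarrow> 'a \<Rightarrow> bool) \<Rightarrow> bool" where
  "geometric_lattice P le \<longleftrightarrow> graded_poset P le \<and> is_lattice P le \<and> atomic P le \<and>
     (\<forall>x\<in>P. \<forall>y\<in>P. \<forall>j m. is_lub P le {x, y} j \<and> is_glb P le {x, y} m \<longrightarrow>
        height P le j + height P le m \<le> height P le x + height P le y)"

definition flag_f :: "'a set \<Rightarrow> ('a \<Rightarrow> 'a \<Rightarrow> bool) \<Rightarrow> nat set \<Rightarrow> nat" where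
  "flag_f P le S = card {C. is_chain P le C \<and> card C = card S \<and> height P le ` C = S}"

definition flag_h :: "'a set \<Rightarrow> ('a \<Rightarrow> 'a \<Rightarrow> bool) \<Rightarrow> nat set \<Rightarrow> int" where
  "flag_h P le S = (\<Sum>T\<in>Pow S. (-1) ^ (card S - card T) * int (flag_f P le T))"

text \<open>Truncated Boolean algebra B_{r+1,n}: subsets of {1..n} of size at most r
  (as Some A) plus an added maximum None.\<close>
definition trunc_bool_carrier :: "nat \<Rightarrow> nat \<Rightarrow> nat set option set" where
  "trunc_bool_carrier r n = {Some A | A. A \<subseteq> {1..n} \<and> card A \<le> r} \<union> {None}"

definition trunc_bool_le :: "nat set option \<Rightarrow> nat set option \<Rightarrow> bool" where
  "trunc_bool_le x y = (case y of None \<Rightarrow> True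
      | Some B \<Rightarrow> (case x of None \<Rightarrow> False | Some A \<Rightarrow> A \<subseteq> B))"

end

theory Submission
  imports Defs
begin

(* Label the n atoms injectively by 1..n. For a chain 0 = x_0 < x_1 < ... < x_k < x_(k+1) = 1
   with rk x_i = i, label the step from x_(i-1) to x_i by the least label of an atom below x_i
   but not below x_(i-1). By semimodularity every such step is the join of x_(i-1) with that
   atom, so a chain whose descents lie in T is rebuilt greedily from its elements with ranks
   in T, and every chain with rank set T arises in this way. Hence f_T counts the chains whose
   descent set lies in T, and by Moebius inversion h_S counts those with descent set exactly S
   (with k = max S).
   The labels of a chain are distinct, and the chain is determined by its first k labels. In
   the truncated Boolean algebra every injective word s_1 ... s_k in [n] is the label word of
   the chain of its prefix sets, whose last label is the least unused one; this is at most the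
   last label of the original chain, so the descent at k = max S and hence the whole descent set
   is preserved. *)

lemma partial_order_on'D:
  assumes "partial_order_on' P le"
  shows partial_order_on'_refl: "x \<in> P \<Longrightarrow> le x x"
    and partial_order_on'_antisym: "x \<in> P \<Longrightarrow> y \<in> P \<Longrightarrow> le x y \<Longrightarrow> le y x \<Longrightarrow> x = y"
    and partial_order_on'_trans:
      "x \<in> P \<Longrightarrow> y \<in> P \<Longrightarrow> z \<in> P \<Longrightarrow> le x y \<Longrightarrow> le y z \<Longrightarrow> le x z"
  using assms unfolding partial_order_on'_def by blast+

lemma is_chain_subset: "is_chain P le C \<Longrightarrow> C \<subseteq> P"
  by (simp add: is_chain_def)

lemma finite_card_chains_below:
  "finite P \<Longrightarrow> finite {card C |C. is_chain P le C \<and> (\<forall>c\<in>C. le c x)}"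
  by (rule finite_subset[of _ "card ` Pow P"]) (auto simp: is_chain_def)

lemma card_chain_le_height:
  assumes "finite P" "is_chain P le C" "\<forall>c\<in>C. le c x"
  shows "card C \<le> height P le x + 1"
proof -
  have "card C \<le> Max {card C |C. is_chain P le C \<and> (\<forall>c\<in>C. le c x)}"
    using assms by (intro Max_ge finite_card_chains_below) auto
  thus ?thesis unfolding height_def by linarith
qed

lemma height_attained:
  assumes "finite P" "partial_order_on' P le" "x \<in> P"
  shows "\<exists>C. is_chain P le C \<and> (\<forall>c\<in>C. le c x) \<and> card C = height P le x + 1"
proof -
  let ?M = "{card C |C. is_chain P le C \<and> (\<forall>c\<in>C. le c x)}"
  have "is_chain P le {x}" "\<forall>c\<in>{x}. le c x"
    using assms(3) partial_order_on'_refl[OF assms(2,3)] by (auto simp: is_chain_def)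
  hence x: "card {x} \<in> ?M" by blast
  have fin: "finite ?M" using assms(1) by (rule finite_card_chains_below)
  have "card {x} \<le> Max ?M" using fin x by (rule Max_ge)
  moreover have "Max ?M \<in> ?M" using fin x by (intro Max_in) auto
  then obtain C where "is_chain P le C" "\<forall>c\<in>C. le c x" "Max ?M = card C" by blast
  ultimately show ?thesis unfolding height_def by auto
qed

lemma height_strict_mono:
  assumes fin: "finite P" and po: "partial_order_on' P le"
    and xy: "x \<in> P" "y \<in> P" "le x y" "x \<noteq> y"
  shows "height P le x < height P le y"
proof -
  obtain C where C: "is_chain P le C" "\<forall>c\<in>C. le c x" "card C = height P le x + 1"
    using height_attained[OF fin po xy(1)] by blast
  have CP: "C \<subseteq> P" using C(1) by (rule is_chain_subset)
  have "y \<notin> C"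
    using C(2) partial_order_on'_antisym[OF po xy(1,2,3)] xy(4) by blast
  moreover have below_y: "le c y" if "c \<in> C" for c
    using that C(2) CP partial_order_on'_trans[OF po _ xy(1,2) _ xy(3)] by blast
  moreover have "le y y" using partial_order_on'_refl[OF po xy(2)] .
  ultimately have "is_chain P le (insert y C)" "\<forall>c\<in>insert y C. le c y"
    using C(1) CP xy(2) unfolding is_chain_def by auto
  hence "card (insert y C) \<le> height P le y + 1" by (rule card_chain_le_height[OF fin])
  thus ?thesis using \<open>y \<notin> C\<close> finite_subset[OF CP fin] C(3) by simp
qed

lemma height_mono:
  "finite P \<Longrightarrow> partial_order_on' P le \<Longrightarrow> x \<in> P \<Longrightarrow> y \<in> P \<Longrightarrow> le x y
    \<Longrightarrow> height P le x \<le> height P le y"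
  using height_strict_mono by (metis order.order_iff_strict)

lemma height_le_strict_mono_fun:
  fixes \<phi> :: "'a \<Rightarrow> nat"
  assumes fin: "finite P" and x: "x \<in> P"
    and strict: "\<And>u v. u \<in> P \<Longrightarrow> v \<in> P \<Longrightarrow> le u v \<Longrightarrow> u \<noteq> v \<Longrightarrow> \<phi> u < \<phi> v"
  shows "height P le x \<le> \<phi> x"
proof -
  have "card C \<le> \<phi> x + 1" if C: "is_chain P le C" "\<forall>c\<in>C. le c x" for C
  proof -
    have CP: "C \<subseteq> P" using C(1) by (rule is_chain_subset)
    have "inj_on \<phi> C"
    proof (rule inj_onI, rule ccontr)
      fix c d assume cd: "c \<in> C" "d \<in> C" "\<phi> c = \<phi> d" "c \<noteq> d"
      have "le c d \<or> le d c" using C(1) cd(1,2) unfolding is_chain_def by blast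
      thus False using strict[of c d] strict[of d c] cd CP by auto
    qed
    moreover have "\<phi> c \<le> \<phi> x" if "c \<in> C" for c
      using strict[of c x] that C(2) CP x by (cases "c = x") auto
    hence "\<phi> ` C \<subseteq> {..\<phi> x}" by auto
    ultimately have "card C \<le> card {..\<phi> x}" by (metis card_inj_on_le finite_atMost)
    thus ?thesis by simp
  qed
  moreover have "{card C |C. is_chain P le C \<and> (\<forall>c\<in>C. le c x)} \<noteq> {}"
    by (auto intro!: exI[of _ "{}"] simp: is_chain_def)
  ultimately have "Max {card C |C. is_chain P le C \<and> (\<forall>c\<in>C. le c x)} \<le> \<phi> x + 1"
    using finite_card_chains_below[OF fin] by (subst Max_le_iff) auto
  thus ?thesis unfolding height_def by simp
qed

locale atomic_semimodular =
  fixes P :: "'a set" and le :: "'a \<Rightarrow> 'a \<Rightarrow> bool"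
  assumes finite_carrier: "finite P"
    and partial_order: "partial_order_on' P le"
    and has_bottom: "\<exists>b\<in>P. \<forall>x\<in>P. le b x"
    and has_top: "\<exists>t\<in>P. \<forall>x\<in>P. le x t"
    and atoms_separate: "\<And>x y. x \<in> P \<Longrightarrow> y \<in> P \<Longrightarrow> le x y \<Longrightarrow> x \<noteq> y \<Longrightarrow>
      \<exists>a\<in>atoms P le. le a y \<and> \<not> le a x"
    and join_atom_exists: "\<And>x a. x \<in> P \<Longrightarrow> a \<in> atoms P le \<Longrightarrow> \<not> le a x \<Longrightarrow>
      \<exists>j. is_lub P le {x, a} j \<and> height P le j \<le> height P le x + 1"
begin

abbreviation rk :: "'a \<Rightarrow> nat" where "rk \<equiv> height P le"

lemmas po_refl = partial_order_on'_refl[OF partial_order]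
  and po_antisym = partial_order_on'_antisym[OF partial_order]
  and po_trans = partial_order_on'_trans[OF partial_order]

lemma rk_less: "x \<in> P \<Longrightarrow> y \<in> P \<Longrightarrow> le x y \<Longrightarrow> x \<noteq> y \<Longrightarrow> rk x < rk y"
  by (rule height_strict_mono[OF finite_carrier partial_order])

lemma rk_mono: "x \<in> P \<Longrightarrow> y \<in> P \<Longrightarrow> le x y \<Longrightarrow> rk x \<le> rk y"
  by (rule height_mono[OF finite_carrier partial_order])

lemma eq_if_le_rk_eq: "x \<in> P \<Longrightarrow> y \<in> P \<Longrightarrow> le x y \<Longrightarrow> rk x = rk y \<Longrightarrow> x = y"
  using rk_less by fastforce

definition hat0 :: 'a where "hat0 = (THE b. b \<in> P \<and> (\<forall>x\<in>P. le b x))"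
definition hat1 :: 'a where "hat1 = (THE t. t \<in> P \<and> (\<forall>x\<in>P. le x t))"

lemma hat0_in: "hat0 \<in> P" and hat0_le: "x \<in> P \<Longrightarrow> le hat0 x"
proof -
  obtain b where b: "b \<in> P" "\<forall>x\<in>P. le b x" using has_bottom by blast
  have "hat0 = b" unfolding hat0_def by (rule the_equality) (use b po_antisym in blast)+
  thus "hat0 \<in> P" "x \<in> P \<Longrightarrow> le hat0 x" using b by auto
qed

lemma hat1_in: "hat1 \<in> P" and le_hat1: "x \<in> P \<Longrightarrow> le x hat1"
proof -
  obtain t where t: "t \<in> P" "\<forall>x\<in>P. le x t" using has_top by blast
  have "hat1 = t" unfolding hat1_def by (rule the_equality) (use t po_antisym in blast)+
  thus "hat1 \<in> P" "x \<in> P \<Longrightarrow> le x hat1" using t by auto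
qed

lemma rk_hat0: "rk hat0 = 0"
proof -
  obtain C where C: "is_chain P le C" "\<forall>c\<in>C. le c hat0" "card C = rk hat0 + 1"
    using height_attained[OF finite_carrier partial_order hat0_in] by blast
  have "C \<subseteq> {hat0}"
    using C(1,2) is_chain_subset po_antisym[OF _ hat0_in _ hat0_le] by blast
  hence "card C \<le> 1" using card_mono[of "{hat0}" C] by simp
  thus ?thesis using C(3) by simp
qed

lemma poset_rank_eq_rk_hat1: "poset_rank P le = rk hat1"
  unfolding poset_rank_def
  by (rule Max_eqI) (use finite_carrier hat1_in rk_mono le_hat1 in auto)

lemma atoms_subset: "atoms P le \<subseteq> P"
  unfolding atoms_def by auto

definition join_atom :: "'a \<Rightarrow> 'a \<Rightarrow> 'a" where
  "join_atom x a = (SOME j. is_lub P le {x, a} j)"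

lemma join_atom:
  assumes "x \<in> P" "a \<in> atoms P le" "\<not> le a x"
  shows "join_atom x a \<in> P" "le x (join_atom x a)" "le a (join_atom x a)"
    and "rk (join_atom x a) = rk x + 1"
    and "\<And>y. y \<in> P \<Longrightarrow> le x y \<Longrightarrow> le a y \<Longrightarrow> le (join_atom x a) y"
proof -
  obtain j where j: "is_lub P le {x, a} j" "rk j \<le> rk x + 1"
    using join_atom_exists[OF assms] by blast
  have lub: "is_lub P le {x, a} (join_atom x a)"
    unfolding join_atom_def using j(1) by (rule someI)
  hence "join_atom x a = j" using j(1) po_antisym unfolding is_lub_def by (metis insertCI)
  show "join_atom x a \<in> P" "le x (join_atom x a)" "le a (join_atom x a)"
    and "\<And>y. y \<in> P \<Longrightarrow> le x y \<Longrightarrow> le a y \<Longrightarrow> le (join_atom x a) y"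
    using lub unfolding is_lub_def by auto
  moreover have "x \<noteq> join_atom x a" using \<open>le a (join_atom x a)\<close> assms(3) by auto
  ultimately have "rk x < rk (join_atom x a)" using rk_less assms(1) by blast
  thus "rk (join_atom x a) = rk x + 1" using j(2) \<open>join_atom x a = j\<close> by simp
qed

lemma join_atom_unique:
  assumes "x \<in> P" "z \<in> P" "a \<in> atoms P le" "le x z" "le a z" "\<not> le a x" "rk z = rk x + 1"
  shows "z = join_atom x a"
  using eq_if_le_rk_eq[of "join_atom x a" z] join_atom[OF assms(1,3,6)] assms by simp

definition rank_chains :: "nat set \<Rightarrow> 'a set set" where
  "rank_chains T = {C. is_chain P le C \<and> card C = card T \<and> rk ` C = T}"

definition chain_elem :: "'a set \<Rightarrow> nat \<Rightarrow> 'a" where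
  "chain_elem C i = (THE c. c \<in> C \<and> rk c = i)"

definition restrict_ranks :: "nat set \<Rightarrow> 'a set \<Rightarrow> 'a set" where
  "restrict_ranks T C = {c \<in> C. rk c \<in> T}"

lemma flag_f_eq_card_rank_chains: "flag_f P le T = card (rank_chains T)"
  unfolding flag_f_def rank_chains_def ..

lemma rank_chains_subset: "C \<in> rank_chains T \<Longrightarrow> C \<subseteq> P"
  unfolding rank_chains_def is_chain_def by blast

lemma finite_rank_chains: "finite (rank_chains T)"
proof (rule finite_subset)
  show "rank_chains T \<subseteq> Pow P" using rank_chains_subset by blast
qed (simp add: finite_carrier)

lemma inj_on_rk_rank_chain:
  assumes "C \<in> rank_chains T"
  shows "inj_on rk C"
proof -
  have "finite C" using assms rank_chains_subset finite_carrier finite_subset by blast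
  moreover have "card (rk ` C) = card C" using assms unfolding rank_chains_def by simp
  ultimately show ?thesis using inj_on_iff_eq_card by blast
qed

lemma chain_elem_rk:
  assumes "C \<in> rank_chains T" "c \<in> C"
  shows "chain_elem C (rk c) = c"
  unfolding chain_elem_def
proof (rule the_equality)
  show "c \<in> C \<and> rk c = rk c" using assms(2) by simp
  show "d = c" if "d \<in> C \<and> rk d = rk c" for d
    using inj_onD[OF inj_on_rk_rank_chain[OF assms(1)]] assms(2) that by blast
qed

lemma chain_elem_mem:
  assumes "C \<in> rank_chains T" "t \<in> T"
  shows "chain_elem C t \<in> C" "rk (chain_elem C t) = t"
proof -
  obtain c where "c \<in> C" "rk c = t" using assms unfolding rank_chains_def by blast
  thus "chain_elem C t \<in> C" "rk (chain_elem C t) = t" using chain_elem_rk[OF assms(1)] by auto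
qed

lemma rank_chain_le:
  assumes C: "C \<in> rank_chains T" and cd: "c \<in> C" "d \<in> C" "rk c \<le> rk d"
  shows "le c d"
proof -
  have P: "c \<in> P" "d \<in> P" using rank_chains_subset[OF C] cd by auto
  show ?thesis
  proof (cases "c = d")
    case True thus ?thesis using po_refl[OF P(1)] by simp
  next
    case False
    hence "\<not> le d c" using rk_less[OF P(2,1)] cd(3) by (metis leD)
    moreover have "le c d \<or> le d c" using C cd unfolding rank_chains_def is_chain_def by blast
    ultimately show ?thesis by blast
  qed
qed

lemma rank_chain_eq_image:
  assumes C: "C \<in> rank_chains T"
  shows "C = chain_elem C ` T"
proof
  show "chain_elem C ` T \<subseteq> C" using chain_elem_mem(1)[OF C] by blast
  show "C \<subseteq> chain_elem C ` T"
  proof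
    fix c assume "c \<in> C"
    hence "rk c \<in> T" "chain_elem C (rk c) = c"
      using C[unfolded rank_chains_def] chain_elem_rk[OF C] by auto
    thus "c \<in> chain_elem C ` T" by (metis imageI)
  qed
qed

lemma restrict_ranks_mem:
  assumes C: "C \<in> rank_chains {1..k}" and T: "T \<subseteq> {1..k}"
  shows "restrict_ranks T C \<in> rank_chains T"
proof -
  have "is_chain P le (restrict_ranks T C)"
    using C unfolding rank_chains_def is_chain_def restrict_ranks_def by blast
  moreover have rk_image: "rk ` restrict_ranks T C = T"
  proof -
    have "rk ` restrict_ranks T C = rk ` C \<inter> T" unfolding restrict_ranks_def by auto
    also have "\<dots> = T" using C T unfolding rank_chains_def by auto
    finally show ?thesis .
  qed
  moreover have "inj_on rk (restrict_ranks T C)"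
    using inj_on_rk_rank_chain[OF C] unfolding restrict_ranks_def by (rule inj_on_subset) auto
  hence "card (restrict_ranks T C) = card T" using card_image rk_image by metis
  ultimately show ?thesis unfolding rank_chains_def by blast
qed

definition chain_seq :: "nat \<Rightarrow> 'a set \<Rightarrow> nat \<Rightarrow> 'a" where
  "chain_seq k C i = (if i = 0 then hat0 else if i \<le> k then chain_elem C i else hat1)"

lemma chain_seq_in:
  assumes "C \<in> rank_chains {1..k}"
  shows "chain_seq k C i \<in> P"
proof -
  have "1 \<le> i \<Longrightarrow> i \<le> k \<Longrightarrow> chain_elem C i \<in> P"
    using chain_elem_mem(1)[OF assms, of i] rank_chains_subset[OF assms] by auto
  thus ?thesis unfolding chain_seq_def using hat0_in hat1_in by auto
qed

lemma chain_seq_mem: "C \<in> rank_chains {1..k} \<Longrightarrow> 1 \<le> i \<Longrightarrow> i \<le> k \<Longrightarrow> chain_seq k C i \<in> C"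
  unfolding chain_seq_def using chain_elem_mem by auto

lemma rk_chain_seq: "C \<in> rank_chains {1..k} \<Longrightarrow> i \<le> k \<Longrightarrow> rk (chain_seq k C i) = i"
  unfolding chain_seq_def using rk_hat0 chain_elem_mem by auto

lemma chain_seq_mono:
  assumes C: "C \<in> rank_chains {1..k}" and "i \<le> j"
  shows "le (chain_seq k C i) (chain_seq k C j)"
proof -
  consider "i = 0" | "k < j" | "1 \<le> i" "j \<le> k" using assms(2) by linarith
  thus ?thesis
  proof cases
    case 1 thus ?thesis using hat0_le chain_seq_in[OF C] unfolding chain_seq_def by simp
  next
    case 2 thus ?thesis using le_hat1 chain_seq_in[OF C] unfolding chain_seq_def[of k C j] by simp
  next
    case 3 thus ?thesis
      using rank_chain_le[OF C] chain_seq_mem[OF C] rk_chain_seq[OF C] assms(2) by simp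
  qed
qed

lemma chain_seq_neq:
  assumes "k < rk hat1" "C \<in> rank_chains {1..k}" "i \<le> k" "i < j"
  shows "chain_seq k C i \<noteq> chain_seq k C j"
proof -
  have "i < rk (chain_seq k C j)"
  proof (cases "j \<le> k")
    case True thus ?thesis using rk_chain_seq[OF assms(2) True] assms(4) by simp
  next
    case False thus ?thesis using assms(1,3) unfolding chain_seq_def by simp
  qed
  thus ?thesis using rk_chain_seq[OF assms(2,3)] by auto
qed

lemma rank_chain_eq_image_chain_seq: "C \<in> rank_chains {1..k} \<Longrightarrow> C = chain_seq k C ` {1..k}"
proof -
  assume C: "C \<in> rank_chains {1..k}"
  have "chain_seq k C ` {1..k} = chain_elem C ` {1..k}" unfolding chain_seq_def by simp
  thus ?thesis using rank_chain_eq_image[OF C] by simp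
qed

end

definition next_rank :: "nat \<Rightarrow> nat set \<Rightarrow> nat \<Rightarrow> nat" where
  "next_rank k T i = (LEAST t. t \<in> insert (Suc k) T \<and> i < t)"

lemma next_rank_mem: "i \<le> k \<Longrightarrow> next_rank k T i \<in> insert (Suc k) T"
  and less_next_rank: "i \<le> k \<Longrightarrow> i < next_rank k T i"
  using LeastI[of "\<lambda>t. t \<in> insert (Suc k) T \<and> i < t" "Suc k"] unfolding next_rank_def by auto

lemma next_rank_le: "t \<in> insert (Suc k) T \<Longrightarrow> i < t \<Longrightarrow> next_rank k T i \<le> t"
  unfolding next_rank_def by (rule Least_le) simp

lemma not_mem_before_next_rank: "i < j \<Longrightarrow> j < next_rank k T i \<Longrightarrow> j \<notin> T"
  using next_rank_le[of j k T i] by auto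

lemma next_rank_eq_Suc: "Suc i \<in> T \<Longrightarrow> next_rank k T i = Suc i"
  unfolding next_rank_def by (rule Least_equality) auto

lemma next_rank_Suc: "Suc i \<notin> T \<Longrightarrow> Suc i \<le> k \<Longrightarrow> next_rank k T (Suc i) = next_rank k T i"
proof -
  assume "Suc i \<notin> T" "Suc i \<le> k"
  hence "t \<in> insert (Suc k) T \<and> Suc i < t \<longleftrightarrow> t \<in> insert (Suc k) T \<and> i < t" for t
    by (cases "t = Suc i") auto
  thus ?thesis unfolding next_rank_def by simp
qed

locale atom_labelled = atomic_semimodular +
  fixes label :: "'a \<Rightarrow> nat"
  assumes inj_label: "inj_on label (atoms P le)"
begin

definition atom_labels :: "'a \<Rightarrow> nat set" where
  "atom_labels x = label ` {a \<in> atoms P le. le a x}"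

lemma atom_labels_mono: "x \<in> P \<Longrightarrow> y \<in> P \<Longrightarrow> le x y \<Longrightarrow> atom_labels x \<subseteq> atom_labels y"
  unfolding atom_labels_def using po_trans atoms_subset by blast

lemma atom_labels_hat1: "atom_labels hat1 = label ` atoms P le"
  unfolding atom_labels_def using le_hat1 atoms_subset by blast

lemma finite_atom_labels: "finite (atom_labels x)"
  unfolding atom_labels_def using finite_subset[OF atoms_subset finite_carrier] by simp

lemma mem_atom_labels_diff:
  "m \<in> atom_labels y - atom_labels x \<longleftrightarrow> (\<exists>a\<in>atoms P le. label a = m \<and> le a y \<and> \<not> le a x)"
  unfolding atom_labels_def using inj_onD[OF inj_label] by blast

lemma atom_labels_diff_nonempty:
  "x \<in> P \<Longrightarrow> y \<in> P \<Longrightarrow> le x y \<Longrightarrow> x \<noteq> y \<Longrightarrow> atom_labels y - atom_labels x \<noteq> {}"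
  using atoms_separate mem_atom_labels_diff by blast

definition atom_of_label :: "nat \<Rightarrow> 'a" where
  "atom_of_label = the_inv_into (atoms P le) label"

lemma atom_of_label_label: "a \<in> atoms P le \<Longrightarrow> atom_of_label (label a) = a"
  unfolding atom_of_label_def by (rule the_inv_into_f_f[OF inj_label])

definition min_label_step :: "'a \<Rightarrow> 'a \<Rightarrow> 'a" where
  "min_label_step x y = join_atom x (atom_of_label (Min (atom_labels y - atom_labels x)))"

lemma min_label_step:
  assumes "x \<in> P" "y \<in> P" "le x y" "x \<noteq> y"
  shows "min_label_step x y \<in> P" "le x (min_label_step x y)" "le (min_label_step x y) y"
    and "rk (min_label_step x y) = rk x + 1"
    and "Min (atom_labels (min_label_step x y) - atom_labels x)
      = Min (atom_labels y - atom_labels x)"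
proof -
  let ?m = "Min (atom_labels y - atom_labels x)"
  have ne: "atom_labels y - atom_labels x \<noteq> {}" using atom_labels_diff_nonempty assms by blast
  hence "?m \<in> atom_labels y - atom_labels x" using finite_atom_labels by (intro Min_in) auto
  then obtain a where a: "a \<in> atoms P le" "label a = ?m" "le a y" "\<not> le a x"
    using mem_atom_labels_diff by blast
  have step: "min_label_step x y = join_atom x a"
    unfolding min_label_step_def using a(2) atom_of_label_label[OF a(1)] by simp
  note join = join_atom[OF assms(1) a(1,4)]
  show "min_label_step x y \<in> P" "le x (min_label_step x y)" "le (min_label_step x y) y"
    and "rk (min_label_step x y) = rk x + 1"
    using join assms a step by auto
  have "atom_labels (min_label_step x y) - atom_labels x \<subseteq> atom_labels y - atom_labels x"
    using atom_labels_mono[of "min_label_step x y" y] join assms step a by auto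
  moreover have "?m \<in> atom_labels (min_label_step x y) - atom_labels x"
    using mem_atom_labels_diff a join(3) step by auto
  ultimately show "Min (atom_labels (min_label_step x y) - atom_labels x) = ?m"
    using finite_atom_labels by (intro order.antisym Min_le Min_antimono) auto
qed

definition chain_label :: "nat \<Rightarrow> 'a set \<Rightarrow> nat \<Rightarrow> nat" where
  "chain_label k C i = Min (atom_labels (chain_seq k C i) - atom_labels (chain_seq k C (i - 1)))"

definition descents :: "nat \<Rightarrow> 'a set \<Rightarrow> nat set" where
  "descents k C = {i \<in> {1..k}. chain_label k C (Suc i) < chain_label k C i}"

lemma chain_label_mem:
  assumes "k < rk hat1" "C \<in> rank_chains {1..k}" "1 \<le> i" "i \<le> Suc k"
  shows "chain_label k C i \<in> atom_labels (chain_seq k C i) - atom_labels (chain_seq k C (i - 1))"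
proof -
  have "chain_seq k C (i - 1) \<noteq> chain_seq k C i"
    using chain_seq_neq[OF assms(1,2), of "i - 1" i] assms(3,4) by simp
  hence "atom_labels (chain_seq k C i) - atom_labels (chain_seq k C (i - 1)) \<noteq> {}"
    using atom_labels_diff_nonempty chain_seq_in[OF assms(2)]
      chain_seq_mono[OF assms(2), of "i - 1" i] by simp
  thus ?thesis unfolding chain_label_def using finite_atom_labels by (intro Min_in) auto
qed

lemma chain_label_le:
  "m \<in> atom_labels (chain_seq k C i) - atom_labels (chain_seq k C (i - 1)) \<Longrightarrow> chain_label k C i \<le> m"
  unfolding chain_label_def by (rule Min_le) (simp_all add: finite_atom_labels)

lemma chain_seq_Suc_eq_join_atom:
  assumes "k < rk hat1" "C \<in> rank_chains {1..k}" "i < k"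
  shows "chain_seq k C (Suc i)
    = join_atom (chain_seq k C i) (atom_of_label (chain_label k C (Suc i)))"
proof -
  obtain a where a: "a \<in> atoms P le" "label a = chain_label k C (Suc i)"
    "le a (chain_seq k C (Suc i))" "\<not> le a (chain_seq k C i)"
    using chain_label_mem[OF assms(1,2), of "Suc i"] assms(3) mem_atom_labels_diff by auto
  have "chain_seq k C (Suc i) = join_atom (chain_seq k C i) a"
    using join_atom_unique[OF chain_seq_in chain_seq_in a(1) chain_seq_mono a(3,4)]
      rk_chain_seq assms(2,3) by simp
  thus ?thesis using atom_of_label_label[OF a(1)] a(2) by simp
qed


lemma exists_step_chain_label_le:
  assumes C: "C \<in> rank_chains {1..k}"
    and m: "m \<in> atom_labels (chain_seq k C t) - atom_labels (chain_seq k C i)"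
  obtains p where "i < p" "p \<le> t" "chain_label k C p \<le> m"
proof -
  define p where "p = (LEAST p. m \<in> atom_labels (chain_seq k C p))"
  have mp: "m \<in> atom_labels (chain_seq k C p)"
    unfolding p_def by (rule LeastI[of _ t]) (use m in blast)
  have pt: "p \<le> t" unfolding p_def by (rule Least_le) (use m in blast)
  have ip: "i < p"
  proof (rule ccontr)
    assume "\<not> i < p"
    hence "atom_labels (chain_seq k C p) \<subseteq> atom_labels (chain_seq k C i)"
      using atom_labels_mono chain_seq_in[OF C] chain_seq_mono[OF C] by simp
    thus False using mp m by blast
  qed
  have "m \<notin> atom_labels (chain_seq k C (p - 1))"
    using ip unfolding p_def by (intro not_less_Least) simp
  hence "chain_label k C p \<le> m" using chain_label_le mp by blast
  thus ?thesis using that ip pt by blast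
qed

text \<open>Between rank \<open>i\<close> and the next rank of \<open>T\<close> the chain has no descents, so its labels
  increase there; hence the first step already picks up the smallest new label.\<close>

lemma chain_label_Suc_eq_Min:
  assumes k: "k < rk hat1" and C: "C \<in> rank_chains {1..k}" and D: "descents k C \<subseteq> T"
    and i: "i < k"
  shows "chain_label k C (Suc i)
    = Min (atom_labels (chain_seq k C (next_rank k T i)) - atom_labels (chain_seq k C i))"
proof -
  define t where "t = next_rank k T i"
  have it: "i < t" and tk: "t \<le> Suc k"
    using less_next_rank[of i k T] next_rank_le[of "Suc k" k T i] i unfolding t_def by auto
  define x where "x = chain_seq k C i"
  define y where "y = chain_seq k C t"
  let ?lb = "chain_label k C"
  define m where "m = Min (atom_labels y - atom_labels x)"
  have "x \<noteq> y" using chain_seq_neq[OF k C] it i unfolding x_def y_def by simp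
  hence "atom_labels y - atom_labels x \<noteq> {}"
    using atom_labels_diff_nonempty chain_seq_in[OF C] chain_seq_mono[OF C] it
    unfolding x_def y_def by simp
  hence m: "m \<in> atom_labels y - atom_labels x"
    unfolding m_def using finite_atom_labels by (intro Min_in) auto
  have "?lb (Suc i) \<in> atom_labels (chain_seq k C (Suc i)) - atom_labels x"
    using chain_label_mem[OF k C, of "Suc i"] i unfolding x_def by simp
  moreover have "atom_labels (chain_seq k C (Suc i)) \<subseteq> atom_labels y"
    using atom_labels_mono chain_seq_in[OF C] chain_seq_mono[OF C] it unfolding y_def by simp
  ultimately have m_le: "m \<le> ?lb (Suc i)"
    unfolding m_def using finite_atom_labels by (intro Min_le) auto
  obtain p where p: "i < p" "p \<le> t" "?lb p \<le> m"
    using exists_step_chain_label_le[OF C m[unfolded x_def y_def]] .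
  moreover have "?lb (Suc i) \<le> ?lb p"
  proof (rule lift_Suc_mono_le_ivl[where f = "chain_label k C" and N = "{Suc i..<p}"])
    fix j assume "j \<in> {Suc i..<p}"
    hence "j \<notin> descents k C" "j \<in> {1..k}"
      using D not_mem_before_next_rank[of i j k T] p(2) tk unfolding t_def by auto
    thus "?lb j \<le> ?lb (Suc j)" unfolding descents_def by simp
  qed (use p(1) in auto)
  ultimately show ?thesis using m_le unfolding m_def x_def y_def t_def by simp
qed

lemma chain_seq_Suc_eq_min_label_step:
  assumes "k < rk hat1" "C \<in> rank_chains {1..k}" "descents k C \<subseteq> T" "i < k"
  shows "chain_seq k C (Suc i) = min_label_step (chain_seq k C i) (chain_seq k C (next_rank k T i))"
  using chain_seq_Suc_eq_join_atom[OF assms(1,2,4)] chain_label_Suc_eq_Min[OF assms]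
  unfolding min_label_step_def by simp

lemma chain_seq_eq_chain_elem_restrict_ranks:
  assumes C: "C \<in> rank_chains {1..k}" and T: "T \<subseteq> {1..k}" "t \<in> T"
  shows "chain_seq k C t = chain_elem (restrict_ranks T C) t"
proof -
  have t: "1 \<le> t" "t \<le> k" using T by auto
  have "chain_elem C t \<in> restrict_ranks T C"
    using chain_elem_mem[OF C, of t] t T(2) unfolding restrict_ranks_def by simp
  hence "chain_elem (restrict_ranks T C) t = chain_elem C t"
    using chain_elem_rk[OF restrict_ranks_mem[OF C T(1)]] chain_elem_mem(2)[OF C, of t] t by force
  thus ?thesis unfolding chain_seq_def using t by simp
qed

text \<open>A chain whose descents lie in \<open>T\<close> is rebuilt greedily from its elements of rank in \<open>T\<close>.\<close>

lemma inj_on_restrict_ranks: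
  assumes k: "k < rk hat1" and T: "T \<subseteq> {1..k}"
  shows "inj_on (restrict_ranks T) {C \<in> rank_chains {1..k}. descents k C \<subseteq> T}"
proof (rule inj_onI)
  fix C1 C2
  assume C1: "C1 \<in> {C \<in> rank_chains {1..k}. descents k C \<subseteq> T}"
    and C2: "C2 \<in> {C \<in> rank_chains {1..k}. descents k C \<subseteq> T}"
    and eq: "restrict_ranks T C1 = restrict_ranks T C2"
  have "chain_seq k C1 i = chain_seq k C2 i" if "i \<le> k" for i
    using that
  proof (induction i)
    case 0 thus ?case unfolding chain_seq_def by simp
  next
    case (Suc i)
    define t where "t = next_rank k T i"
    have "t \<in> insert (Suc k) T" using next_rank_mem Suc.prems unfolding t_def by simp
    hence "chain_seq k C1 t = chain_seq k C2 t"
    proof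
      assume "t = Suc k"
      thus ?thesis unfolding chain_seq_def by simp
    next
      assume "t \<in> T"
      thus ?thesis
        using chain_seq_eq_chain_elem_restrict_ranks[OF _ T] C1 C2 eq by simp
    qed
    thus ?case
      using chain_seq_Suc_eq_min_label_step[OF k, of _ T i] C1 C2 Suc unfolding t_def by simp
  qed
  hence "chain_seq k C1 ` {1..k} = chain_seq k C2 ` {1..k}" by (intro image_cong) auto
  thus "C1 = C2"
    using rank_chain_eq_image_chain_seq[of C1 k] rank_chain_eq_image_chain_seq[of C2 k] C1 C2
    by (metis (no_types, lifting) mem_Collect_eq)
qed


text \<open>Conversely, a chain \<open>D\<close> with rank set \<open>T\<close> is extended by climbing from \<open>\<hat>0\<close>, each
  time joining the atom of least new label below the next element of \<open>D\<close> (or below \<open>\<hat>1\<close>).\<close>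

definition greedy_target :: "nat \<Rightarrow> nat set \<Rightarrow> 'a set \<Rightarrow> nat \<Rightarrow> 'a" where
  "greedy_target k T D i =
    (if next_rank k T i \<le> k then chain_elem D (next_rank k T i) else hat1)"

primrec greedy_seq :: "nat \<Rightarrow> nat set \<Rightarrow> 'a set \<Rightarrow> nat \<Rightarrow> 'a" where
  "greedy_seq k T D 0 = hat0"
| "greedy_seq k T D (Suc i) = min_label_step (greedy_seq k T D i) (greedy_target k T D i)"

definition greedy_chain :: "nat \<Rightarrow> nat set \<Rightarrow> 'a set \<Rightarrow> 'a set" where
  "greedy_chain k T D = greedy_seq k T D ` {1..k}"

context
  fixes k :: nat and T :: "nat set" and D :: "'a set"
  assumes k: "k < rk hat1" and T: "T \<subseteq> {1..k}" and D: "D \<in> rank_chains T"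
begin

lemma greedy_target_in: "greedy_target k T D i \<in> P"
  and less_rk_greedy_target: "i < rk (greedy_target k T D i)"
  if i: "i \<le> k"
proof -
  have "greedy_target k T D i \<in> P \<and> i < rk (greedy_target k T D i)"
  proof (cases "next_rank k T i \<le> k")
    case True
    hence "next_rank k T i \<in> T" using next_rank_mem[OF i, of T] by auto
    thus ?thesis
      using True chain_elem_mem[OF D] rank_chains_subset[OF D] less_next_rank[OF i, of T]
      unfolding greedy_target_def by auto
  next
    case False
    thus ?thesis using hat1_in k i unfolding greedy_target_def by auto
  qed
  thus "greedy_target k T D i \<in> P" "i < rk (greedy_target k T D i)" by auto
qed

lemma chain_elem_le_greedy_target:
  assumes "t \<in> T" "t \<le> i" "i \<le> k"
  shows "le (chain_elem D t) (greedy_target k T D i)"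
proof (cases "next_rank k T i \<le> k")
  case True
  hence "next_rank k T i \<in> T" using next_rank_mem[OF assms(3), of T] by auto
  moreover have "t \<le> next_rank k T i" using less_next_rank[of i k T] assms(2,3) by simp
  ultimately show ?thesis
    using True rank_chain_le[OF D] chain_elem_mem[OF D] assms(1) unfolding greedy_target_def by simp
next
  case False
  thus ?thesis
    using le_hat1 chain_elem_mem(1)[OF D assms(1)] rank_chains_subset[OF D]
    unfolding greedy_target_def by auto
qed

lemma greedy_seq_Suc:
  assumes i: "i < k" and x: "greedy_seq k T D i \<in> P" "rk (greedy_seq k T D i) = i"
    "le (greedy_seq k T D i) (greedy_target k T D i)"
  shows "greedy_seq k T D (Suc i) \<in> P" "rk (greedy_seq k T D (Suc i)) = Suc i"
    and "le (greedy_seq k T D (Suc i)) (greedy_target k T D i)"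
    and "Suc i \<in> T \<Longrightarrow> greedy_seq k T D (Suc i) = chain_elem D (Suc i)"
proof -
  have "greedy_seq k T D i \<noteq> greedy_target k T D i"
    using less_rk_greedy_target[of i] i x(2) by auto
  note step = min_label_step[OF x(1) greedy_target_in x(3) this]
  show in_P: "greedy_seq k T D (Suc i) \<in> P" and rk_Suc: "rk (greedy_seq k T D (Suc i)) = Suc i"
    and below: "le (greedy_seq k T D (Suc i)) (greedy_target k T D i)"
    using step x(2) i by auto
  assume "Suc i \<in> T"
  hence "greedy_target k T D i = chain_elem D (Suc i)" "rk (greedy_target k T D i) = Suc i"
    unfolding greedy_target_def using next_rank_eq_Suc chain_elem_mem(2)[OF D] i by auto
  thus "greedy_seq k T D (Suc i) = chain_elem D (Suc i)"
    using eq_if_le_rk_eq[OF in_P greedy_target_in below] rk_Suc i by simp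
qed

lemma greedy_seq_invariant:
  "i \<le> k \<Longrightarrow> greedy_seq k T D i \<in> P \<and> rk (greedy_seq k T D i) = i
    \<and> le (greedy_seq k T D i) (greedy_target k T D i)"
proof (induction i)
  case 0 thus ?case using hat0_in hat0_le rk_hat0 greedy_target_in by simp
next
  case (Suc i)
  hence i: "i < k" and IH: "greedy_seq k T D i \<in> P" "rk (greedy_seq k T D i) = i"
    "le (greedy_seq k T D i) (greedy_target k T D i)" by auto
  note step = greedy_seq_Suc[OF i IH]
  have "le (greedy_seq k T D (Suc i)) (greedy_target k T D (Suc i))"
  proof (cases "Suc i \<in> T")
    case False
    hence "greedy_target k T D (Suc i) = greedy_target k T D i"
      unfolding greedy_target_def using next_rank_Suc Suc.prems by simp
    thus ?thesis using step(3) by simp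
  next
    case True
    thus ?thesis using step(4) chain_elem_le_greedy_target[OF True order.refl Suc.prems] by simp
  qed
  thus ?case using step(1,2) by simp
qed

lemma greedy_seq:
  assumes "i \<le> k"
  shows "greedy_seq k T D i \<in> P" "rk (greedy_seq k T D i) = i"
    and "le (greedy_seq k T D i) (greedy_target k T D i)"
    and "i \<in> T \<Longrightarrow> greedy_seq k T D i = chain_elem D i"
proof -
  show "greedy_seq k T D i \<in> P" "rk (greedy_seq k T D i) = i"
    "le (greedy_seq k T D i) (greedy_target k T D i)"
    using greedy_seq_invariant[OF assms] by auto
  assume "i \<in> T"
  then obtain j where j: "i = Suc j" using T by (cases i) auto
  hence "j < k" using assms by simp
  thus "greedy_seq k T D i = chain_elem D i"
    using greedy_seq_Suc(4) greedy_seq_invariant[of j] \<open>i \<in> T\<close> j by auto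
qed

lemma greedy_seq_mono:
  assumes "i \<le> j" "j \<le> k"
  shows "le (greedy_seq k T D i) (greedy_seq k T D j)"
  using assms
proof (induction j rule: dec_induct)
  case base thus ?case using po_refl greedy_seq(1) by simp
next
  case (step j)
  have j: "j \<le> k" using step.hyps(2) step.prems by simp
  have "greedy_seq k T D j \<noteq> greedy_target k T D j"
    using less_rk_greedy_target[OF j] greedy_seq(2)[OF j] by auto
  hence "le (greedy_seq k T D j) (greedy_seq k T D (Suc j))"
    using min_label_step(2)[OF greedy_seq(1)[OF j] greedy_target_in[OF j] greedy_seq(3)[OF j]]
    by simp
  moreover have "le (greedy_seq k T D i) (greedy_seq k T D j)" using step.IH j by blast
  moreover have "i \<le> k" using step.hyps(1) j by simp
  ultimately show ?case
    using po_trans[OF greedy_seq(1)[of i] greedy_seq(1)[OF j] greedy_seq(1)[OF step.prems]] by blast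
qed

lemma greedy_chain_mem: "greedy_chain k T D \<in> rank_chains {1..k}"
proof -
  have inj: "inj_on (greedy_seq k T D) {1..k}"
  proof (rule inj_onI)
    fix i j assume "i \<in> {1..k}" "j \<in> {1..k}" "greedy_seq k T D i = greedy_seq k T D j"
    thus "i = j" using greedy_seq(2)[of i] greedy_seq(2)[of j] by (metis atLeastAtMost_iff)
  qed
  have "rk ` greedy_chain k T D = (\<lambda>i. i) ` {1..k}"
    unfolding greedy_chain_def image_image by (rule image_cong) (simp_all add: greedy_seq(2))
  hence "rk ` greedy_chain k T D = {1..k}" by simp
  moreover have "is_chain P le (greedy_chain k T D)"
    unfolding is_chain_def greedy_chain_def
  proof (intro conjI ballI)
    show "greedy_seq k T D ` {1..k} \<subseteq> P" using greedy_seq(1) by auto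
    fix x y assume "x \<in> greedy_seq k T D ` {1..k}" "y \<in> greedy_seq k T D ` {1..k}"
    then obtain i j where "x = greedy_seq k T D i" "y = greedy_seq k T D j" "i \<le> k" "j \<le> k"
      by auto
    thus "le x y \<or> le y x" using greedy_seq_mono nat_le_linear[of i j] by blast
  qed
  ultimately show ?thesis
    unfolding rank_chains_def greedy_chain_def using card_image[OF inj] by simp
qed

lemma chain_seq_greedy_chain:
  assumes "i \<le> k"
  shows "chain_seq k (greedy_chain k T D) i = greedy_seq k T D i"
proof (cases "i = 0")
  case False
  hence "greedy_seq k T D i \<in> greedy_chain k T D" using assms unfolding greedy_chain_def by simp
  from chain_elem_rk[OF greedy_chain_mem this]
  have "chain_elem (greedy_chain k T D) i = greedy_seq k T D i"
    using greedy_seq(2)[OF assms] by simp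
  thus ?thesis unfolding chain_seq_def using False assms by simp
qed (simp add: chain_seq_def)

lemma restrict_ranks_greedy_chain: "restrict_ranks T (greedy_chain k T D) = D"
proof -
  have "restrict_ranks T (greedy_chain k T D) = greedy_seq k T D ` ({1..k} \<inter> T)"
    unfolding restrict_ranks_def greedy_chain_def using greedy_seq(2) by auto
  also have "\<dots> = greedy_seq k T D ` T" using T by (simp add: Int_absorb1)
  also have "\<dots> = chain_elem D ` T" using greedy_seq(4) T by (intro image_cong) auto
  finally show ?thesis by (simp add: rank_chain_eq_image[OF D, symmetric])
qed

lemma chain_label_greedy_chain:
  assumes i: "i \<le> k"
  shows "chain_label k (greedy_chain k T D) (Suc i)
    = Min (atom_labels (greedy_target k T D i) - atom_labels (greedy_seq k T D i))"
proof (cases "i < k")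
  case True
  have "greedy_seq k T D i \<noteq> greedy_target k T D i"
    using less_rk_greedy_target[OF i] greedy_seq(2)[OF i] by auto
  note step =
    min_label_step(5)[OF greedy_seq(1)[OF i] greedy_target_in[OF i] greedy_seq(3)[OF i] this]
  show ?thesis
    unfolding chain_label_def using chain_seq_greedy_chain[OF i] chain_seq_greedy_chain[of "Suc i"]
      True step by simp
next
  case False
  have "next_rank k T i \<in> insert (Suc k) T" "i < next_rank k T i"
    using next_rank_mem[OF i] less_next_rank[OF i] by auto
  hence "next_rank k T i = Suc k" using T False i by auto
  moreover have "chain_seq k (greedy_chain k T D) (Suc i) = hat1"
    using False i unfolding chain_seq_def by simp
  ultimately show ?thesis
    unfolding chain_label_def greedy_target_def using chain_seq_greedy_chain[OF i] by simp
qed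

lemma descents_greedy_chain: "descents k (greedy_chain k T D) \<subseteq> T"
proof
  fix i assume i: "i \<in> descents k (greedy_chain k T D)"
  show "i \<in> T"
  proof (rule ccontr)
    assume "i \<notin> T"
    have "1 \<le> i" "i \<le> k" using i unfolding descents_def by auto
    then obtain j where j: "i = Suc j" "j < k" by (cases i) auto
    hence i_le: "i \<le> k" and j_le: "j \<le> k" by auto
    let ?g = "greedy_seq k T D" and ?t = "greedy_target k T D"
    have same_target: "?t i = ?t j"
      unfolding greedy_target_def using next_rank_Suc \<open>i \<notin> T\<close> j by simp
    have "?g i \<noteq> ?t i" using less_rk_greedy_target[OF i_le] greedy_seq(2)[OF i_le] by auto
    hence "atom_labels (?t i) - atom_labels (?g i) \<noteq> {}"
      using atom_labels_diff_nonempty[OF greedy_seq(1)[OF i_le] greedy_target_in[OF i_le]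
          greedy_seq(3)[OF i_le]] by blast
    moreover have "atom_labels (?g j) \<subseteq> atom_labels (?g i)"
      using atom_labels_mono[OF greedy_seq(1)[OF j_le] greedy_seq(1)[OF i_le]
          greedy_seq_mono[OF _ i_le]] j by simp
    ultimately have "Min (atom_labels (?t j) - atom_labels (?g j))
        \<le> Min (atom_labels (?t i) - atom_labels (?g i))"
      using same_target finite_atom_labels by (intro Min_antimono) auto
    hence "chain_label k (greedy_chain k T D) i \<le> chain_label k (greedy_chain k T D) (Suc i)"
      using chain_label_greedy_chain[OF j_le] chain_label_greedy_chain[OF i_le] j by simp
    thus False using i unfolding descents_def by simp
  qed
qed

end

lemma bij_betw_restrict_ranks:
  assumes "k < rk hat1" "T \<subseteq> {1..k}"
  shows "bij_betw (restrict_ranks T) {C \<in> rank_chains {1..k}. descents k C \<subseteq> T} (rank_chains T)"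
  unfolding bij_betw_def
proof
  show "inj_on (restrict_ranks T) {C \<in> rank_chains {1..k}. descents k C \<subseteq> T}"
    by (rule inj_on_restrict_ranks[OF assms])
  show "restrict_ranks T ` {C \<in> rank_chains {1..k}. descents k C \<subseteq> T} = rank_chains T"
  proof
    show "restrict_ranks T ` {C \<in> rank_chains {1..k}. descents k C \<subseteq> T} \<subseteq> rank_chains T"
      using restrict_ranks_mem[OF _ assms(2)] by blast
    show "rank_chains T \<subseteq> restrict_ranks T ` {C \<in> rank_chains {1..k}. descents k C \<subseteq> T}"
    proof
      fix D assume D: "D \<in> rank_chains T"
      show "D \<in> restrict_ranks T ` {C \<in> rank_chains {1..k}. descents k C \<subseteq> T}"
        by (rule image_eqI[where f = "restrict_ranks T",
              OF restrict_ranks_greedy_chain[OF assms D, symmetric]])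
          (use greedy_chain_mem[OF assms D] descents_greedy_chain[OF assms D] in blast)
    qed
  qed
qed


lemma flag_h_eq_card_descents:
  assumes k: "k < rk hat1" and S: "S \<subseteq> {1..k}"
  shows "flag_h P le S = int (card {C \<in> rank_chains {1..k}. descents k C = S})"
proof -
  define f where "f U = int (card {C \<in> rank_chains {1..k}. descents k C = U})" for U
  define g where "g U = int (card {C \<in> rank_chains {1..k}. descents k C \<subseteq> U})" for U
  have "g U = sum f (Pow U)" if "finite U" for U
  proof -
    have "{C \<in> rank_chains {1..k}. descents k C \<subseteq> U}
        = (\<Union>V\<in>Pow U. {C \<in> rank_chains {1..k}. descents k C = V})" by blast
    hence "card {C \<in> rank_chains {1..k}. descents k C \<subseteq> U}
        = (\<Sum>V\<in>Pow U. card {C \<in> rank_chains {1..k}. descents k C = V})"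
      using that finite_rank_chains by (simp, intro card_UN_disjoint) auto
    thus ?thesis unfolding f_def g_def by simp
  qed
  hence "f S = (\<Sum>T\<in>Pow S. (-1) ^ (card S - card T) * g T)"
    using S finite_subset by (intro inclusion_exclusion_mobius) auto
  also have "\<dots> = flag_h P le S"
    unfolding flag_h_def g_def flag_f_eq_card_rank_chains
    using bij_betw_same_card[OF bij_betw_restrict_ranks[OF k]] S by (intro sum.cong) auto
  finally show ?thesis unfolding f_def by simp
qed

lemma chain_label_in_atom_labels_hat1:
  assumes "k < rk hat1" "C \<in> rank_chains {1..k}" "1 \<le> i" "i \<le> Suc k"
  shows "chain_label k C i \<in> atom_labels hat1"
proof -
  have "chain_label k C i \<in> atom_labels (chain_seq k C i)" using chain_label_mem[OF assms] by blast
  moreover have "atom_labels (chain_seq k C i) \<subseteq> atom_labels hat1"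
    using atom_labels_mono[OF chain_seq_in[OF assms(2)] hat1_in
        le_hat1[OF chain_seq_in[OF assms(2)]]] .
  ultimately show ?thesis by blast
qed

lemma inj_on_chain_label:
  assumes k: "k < rk hat1" and C: "C \<in> rank_chains {1..k}"
  shows "inj_on (chain_label k C) {1..Suc k}"
proof -
  have distinct: "chain_label k C i \<noteq> chain_label k C j" if ij: "1 \<le> i" "i < j" "j \<le> Suc k" for i j
  proof -
    have "chain_label k C i \<in> atom_labels (chain_seq k C i)"
      using chain_label_mem[OF k C, of i] ij by auto
    moreover have "atom_labels (chain_seq k C i) \<subseteq> atom_labels (chain_seq k C (j - 1))"
      using atom_labels_mono[OF chain_seq_in[OF C] chain_seq_in[OF C]
          chain_seq_mono[OF C, of i "j - 1"]] ij by simp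
    ultimately have "chain_label k C i \<in> atom_labels (chain_seq k C (j - 1))" by blast
    moreover have "chain_label k C j \<notin> atom_labels (chain_seq k C (j - 1))"
      using chain_label_mem[OF k C, of j] ij by auto
    ultimately show ?thesis by metis
  qed
  show ?thesis
  proof (rule inj_onI, rule ccontr)
    fix i j assume "i \<in> {1..Suc k}" "j \<in> {1..Suc k}" "chain_label k C i = chain_label k C j" "i \<noteq> j"
    thus False using distinct[of i j] distinct[of j i] by (cases "i < j") auto
  qed
qed

lemma rk_hat1_le_card_atom_labels: "rk hat1 \<le> card (atom_labels hat1)"
proof (cases "rk hat1")
  case (Suc k)
  hence k: "k < rk hat1" by simp
  have "rank_chains {} = {{}}" unfolding rank_chains_def is_chain_def by auto
  hence C: "greedy_chain k {} {} \<in> rank_chains {1..k}" using greedy_chain_mem[OF k] by simp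
  have "card {1..Suc k} \<le> card (atom_labels hat1)"
    using card_inj_on_le[OF inj_on_chain_label[OF k C] _ finite_atom_labels]
      chain_label_in_atom_labels_hat1[OF k C] by force
  thus ?thesis using Suc by simp
qed simp

definition label_word :: "nat \<Rightarrow> 'a set \<Rightarrow> nat list" where
  "label_word k C = map (chain_label k C) [1..<Suc k]"

lemma inj_on_label_word:
  assumes k: "k < rk hat1"
  shows "inj_on (label_word k) (rank_chains {1..k})"
proof (rule inj_onI)
  fix C1 C2 assume C1: "C1 \<in> rank_chains {1..k}" and C2: "C2 \<in> rank_chains {1..k}"
    and words: "label_word k C1 = label_word k C2"
  have "\<forall>i\<in>set [1..<Suc k]. chain_label k C1 i = chain_label k C2 i"
    using words unfolding label_word_def map_eq_conv .
  hence labels: "chain_label k C1 i = chain_label k C2 i" if "1 \<le> i" "i \<le> k" for i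
    using that by auto
  have "chain_seq k C1 i = chain_seq k C2 i" if "i \<le> k" for i
    using that
  proof (induction i)
    case 0 thus ?case unfolding chain_seq_def by simp
  next
    case (Suc i)
    thus ?case
      using chain_seq_Suc_eq_join_atom[OF k C1, of i] chain_seq_Suc_eq_join_atom[OF k C2, of i]
        labels[of "Suc i"] by simp
  qed
  hence "chain_seq k C1 ` {1..k} = chain_seq k C2 ` {1..k}" by (intro image_cong) auto
  thus "C1 = C2"
    using rank_chain_eq_image_chain_seq[OF C1] rank_chain_eq_image_chain_seq[OF C2] by metis
qed

end

lemma trunc_bool_le_simps [simp]:
  "trunc_bool_le x None"
  "\<not> trunc_bool_le None (Some Y)"
  "trunc_bool_le (Some X) (Some Y) \<longleftrightarrow> X \<subseteq> Y"
  unfolding trunc_bool_le_def by (auto split: option.splits)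

lemma Some_in_trunc_bool_carrier:
  "Some X \<in> trunc_bool_carrier r n \<longleftrightarrow> X \<subseteq> {1..n} \<and> card X \<le> r"
  unfolding trunc_bool_carrier_def by auto

lemma finite_if_Some_in_trunc_bool_carrier: "Some X \<in> trunc_bool_carrier r n \<Longrightarrow> finite X"
  unfolding Some_in_trunc_bool_carrier using finite_subset[of X "{1..n}"] by simp

lemma None_in_trunc_bool_carrier: "None \<in> trunc_bool_carrier r n"
  unfolding trunc_bool_carrier_def by auto

lemma finite_trunc_bool_carrier: "finite (trunc_bool_carrier r n)"
proof (rule finite_subset)
  show "trunc_bool_carrier r n \<subseteq> insert None (Some ` Pow {1..n})"
    unfolding trunc_bool_carrier_def by auto
qed simp

lemma partial_order_trunc_bool: "partial_order_on' (trunc_bool_carrier r n) trunc_bool_le"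
  unfolding partial_order_on'_def trunc_bool_le_def by (auto split: option.splits)

definition trunc_bool_rank :: "nat \<Rightarrow> nat set option \<Rightarrow> nat" where
  "trunc_bool_rank r x = (case x of None \<Rightarrow> r + 1 | Some X \<Rightarrow> card X)"

text \<open>Labels the atom \<open>Some {j}\<close> by \<open>j\<close>; the values on other elements are irrelevant.\<close>

definition min_label :: "nat set option \<Rightarrow> nat" where
  "min_label x = (case x of None \<Rightarrow> 0 | Some X \<Rightarrow> Min X)"

locale trunc_bool =
  fixes r n :: nat
  assumes r_pos: "1 \<le> r" and r_less_n: "r < n"
begin

abbreviation (input) B where "B \<equiv> trunc_bool_carrier r n"

lemma trunc_bool_rank_strict_mono:
  assumes x: "x \<in> B" and y: "y \<in> B" and le: "trunc_bool_le x y" and ne: "x \<noteq> y"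
  shows "trunc_bool_rank r x < trunc_bool_rank r y"
proof (cases y)
  case None
  then obtain X where "x = Some X" using ne by (cases x) auto
  thus ?thesis using x None Some_in_trunc_bool_carrier unfolding trunc_bool_rank_def by auto
next
  case (Some Y)
  then obtain X where X: "x = Some X" using le by (cases x) auto
  have "finite Y" using y Some finite_if_Some_in_trunc_bool_carrier by blast
  moreover have "X \<subset> Y" using X Some le ne by auto
  ultimately show ?thesis using psubset_card_mono X Some unfolding trunc_bool_rank_def by simp
qed

lemma height_trunc_bool_le:
  assumes "x \<in> B"
  shows "height B trunc_bool_le x \<le> trunc_bool_rank r x"
  using finite_trunc_bool_carrier assms trunc_bool_rank_strict_mono
  by (rule height_le_strict_mono_fun)

lemma height_trunc_bool_Some:
  "Some X \<in> B \<Longrightarrow> height B trunc_bool_le (Some X) = card X"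
proof (induction "card X" arbitrary: X)
  case 0 thus ?case using height_trunc_bool_le[OF 0(2)] unfolding trunc_bool_rank_def by simp
next
  case (Suc m)
  have fin: "finite X" using Suc.prems by (rule finite_if_Some_in_trunc_bool_carrier)
  then obtain x where x: "x \<in> X" using Suc.hyps(2) by (metis card.empty ex_in_conv nat.distinct(1))
  have sub: "Some (X - {x}) \<in> B"
    using Suc.prems card_Diff1_le[of X x] Some_in_trunc_bool_carrier by auto
  have "card (X - {x}) = m" using Suc.hyps(2) x fin by simp
  moreover have "height B trunc_bool_le (Some (X - {x})) < height B trunc_bool_le (Some X)"
    by (rule height_strict_mono[OF finite_trunc_bool_carrier partial_order_trunc_bool
          sub Suc.prems])
      (use x in auto)
  moreover have "height B trunc_bool_le (Some X) \<le> card X"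
    using height_trunc_bool_le[OF Suc.prems] unfolding trunc_bool_rank_def by simp
  ultimately show ?case using Suc.hyps(1)[OF _ sub] Suc.hyps(2) by simp
qed

lemma height_trunc_bool_None: "height B trunc_bool_le None = r + 1"
proof -
  have s: "Some {1..r} \<in> B" using r_less_n Some_in_trunc_bool_carrier by simp
  have "height B trunc_bool_le (Some {1..r}) < height B trunc_bool_le None"
    by (rule height_strict_mono[OF finite_trunc_bool_carrier partial_order_trunc_bool s
          None_in_trunc_bool_carrier]) auto
  moreover have "height B trunc_bool_le None \<le> r + 1"
    using height_trunc_bool_le[OF None_in_trunc_bool_carrier] unfolding trunc_bool_rank_def by simp
  ultimately show ?thesis using height_trunc_bool_Some[OF s] by simp
qed

lemma atoms_trunc_bool: "atoms B trunc_bool_le = (\<lambda>j. Some {j}) ` {1..n}"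
proof
  show "atoms B trunc_bool_le \<subseteq> (\<lambda>j. Some {j}) ` {1..n}"
  proof
    fix a assume "a \<in> atoms B trunc_bool_le"
    hence a: "a \<in> B" "height B trunc_bool_le a = 1" unfolding atoms_def by auto
    then obtain X where X: "a = Some X" using height_trunc_bool_None r_pos by (cases a) auto
    hence "card X = 1" using a height_trunc_bool_Some by simp
    then obtain j where "X = {j}" using card_1_singletonE by blast
    thus "a \<in> (\<lambda>j. Some {j}) ` {1..n}" using X a(1) Some_in_trunc_bool_carrier by auto
  qed
  show "(\<lambda>j. Some {j}) ` {1..n} \<subseteq> atoms B trunc_bool_le"
    unfolding atoms_def using r_pos Some_in_trunc_bool_carrier height_trunc_bool_Some by auto
qed

lemma is_lub_trunc_bool_None:
  assumes X: "Some X \<in> B" "card X = r" and j: "j \<notin> X"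
  shows "is_lub B trunc_bool_le {Some X, Some {j}} None"
  unfolding is_lub_def
proof (intro conjI ballI impI)
  fix y assume y: "y \<in> B" "\<forall>u\<in>{Some X, Some {j}}. trunc_bool_le u y"
  show "trunc_bool_le None y"
  proof (cases y)
    case (Some Y)
    hence "insert j X \<subseteq> Y" "Y \<subseteq> {1..n}" "card Y \<le> r"
      using y Some_in_trunc_bool_carrier by auto
    hence "card (insert j X) \<le> card Y"
      using card_mono[OF finite_subset[OF _ finite_atLeastAtMost]] by blast
    hence "card (insert j X) \<le> r" using \<open>card Y \<le> r\<close> by simp
    thus ?thesis using X j finite_if_Some_in_trunc_bool_carrier by simp
  qed simp
qed (simp_all add: None_in_trunc_bool_carrier)

lemma join_atom_trunc_bool:
  assumes x: "x \<in> B" and j: "j \<in> {1..n}" and not_le: "\<not> trunc_bool_le (Some {j}) x"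
  shows "\<exists>u. is_lub B trunc_bool_le {x, Some {j}} u
    \<and> height B trunc_bool_le u \<le> height B trunc_bool_le x + 1"
proof -
  obtain X where X: "x = Some X" using not_le by (cases x) auto
  have jX: "j \<notin> X" using not_le X by simp
  have Xs: "X \<subseteq> {1..n}" "card X \<le> r" using x X Some_in_trunc_bool_carrier by auto
  have fin: "finite X" using x X finite_if_Some_in_trunc_bool_carrier by blast
  show ?thesis
  proof (cases "card X < r")
    case True
    have u: "Some (insert j X) \<in> B" using Xs j True fin jX Some_in_trunc_bool_carrier by simp
    have "is_lub B trunc_bool_le {x, Some {j}} (Some (insert j X))"
      unfolding is_lub_def using u X by (auto simp: trunc_bool_le_def split: option.splits)
    moreover have "height B trunc_bool_le (Some (insert j X)) = height B trunc_bool_le x + 1"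
      using height_trunc_bool_Some u x X fin jX by simp
    ultimately show ?thesis by auto
  next
    case False
    hence "card X = r" using Xs by simp
    hence "is_lub B trunc_bool_le {x, Some {j}} None"
      and "height B trunc_bool_le None = height B trunc_bool_le x + 1"
      using is_lub_trunc_bool_None[of X j] height_trunc_bool_None height_trunc_bool_Some x X jX
      by simp_all
    thus ?thesis by auto
  qed
qed

sublocale atom_labelled B trunc_bool_le min_label
proof
  show "finite B" by (rule finite_trunc_bool_carrier)
  show "partial_order_on' B trunc_bool_le" by (rule partial_order_trunc_bool)
  show "\<exists>b\<in>B. \<forall>x\<in>B. trunc_bool_le b x"
    by (rule bexI[of _ "Some {}"])
      (auto simp: Some_in_trunc_bool_carrier trunc_bool_le_def split: option.splits)
  show "\<exists>t\<in>B. \<forall>x\<in>B. trunc_bool_le x t"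
    by (rule bexI[of _ None]) (simp_all add: None_in_trunc_bool_carrier)
  show "inj_on min_label (atoms B trunc_bool_le)"
    unfolding atoms_trunc_bool min_label_def by (rule inj_onI) auto
next
  fix x y assume xy: "x \<in> B" "y \<in> B" "trunc_bool_le x y" "x \<noteq> y"
  then obtain X where X: "x = Some X" by (cases x; cases y) auto
  have "\<exists>j\<in>{1..n}. j \<notin> X \<and> (\<forall>Y. y = Some Y \<longrightarrow> j \<in> Y)"
  proof (cases y)
    case None
    have X_sub: "X \<subseteq> {1..n}" "card X \<le> r" using xy(1) X Some_in_trunc_bool_carrier by auto
    have "\<not> {1..n} \<subseteq> X"
    proof
      assume "{1..n} \<subseteq> X"
      hence "card {1..n} \<le> card X"
        by (rule card_mono[OF finite_subset[OF X_sub(1) finite_atLeastAtMost]])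
      thus False using X_sub(2) r_less_n by simp
    qed
    thus ?thesis using None by auto
  next
    case (Some Y)
    hence "X \<subset> Y" "Y \<subseteq> {1..n}" using xy X Some_in_trunc_bool_carrier by auto
    thus ?thesis using Some by blast
  qed
  thus "\<exists>a\<in>atoms B trunc_bool_le. trunc_bool_le a y \<and> \<not> trunc_bool_le a x"
    unfolding atoms_trunc_bool using X by (cases y) auto
next
  fix x a assume "x \<in> B" "a \<in> atoms B trunc_bool_le" "\<not> trunc_bool_le a x"
  thus "\<exists>j. is_lub B trunc_bool_le {x, a} j
    \<and> height B trunc_bool_le j \<le> height B trunc_bool_le x + 1"
    using join_atom_trunc_bool unfolding atoms_trunc_bool by blast
qed

lemma hat0_trunc_bool: "hat0 = Some {}"
  using hat0_le[of "Some {}"] Some_in_trunc_bool_carrier by (cases hat0) auto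

lemma hat1_trunc_bool: "hat1 = None"
  using le_hat1[OF None_in_trunc_bool_carrier] by (cases hat1) auto

lemma atom_labels_trunc_bool_Some: "X \<subseteq> {1..n} \<Longrightarrow> atom_labels (Some X) = X"
  unfolding atom_labels_def atoms_trunc_bool min_label_def by (auto simp: image_image) force

lemma atom_labels_trunc_bool_None: "atom_labels None = {1..n}"
  unfolding atom_labels_def atoms_trunc_bool min_label_def by (auto simp: image_image)

end

context trunc_bool
begin

definition prefix_chain :: "nat \<Rightarrow> (nat \<Rightarrow> nat) \<Rightarrow> nat set option set" where
  "prefix_chain k s = (\<lambda>i. Some (s ` {1..i})) ` {1..k}"

context
  fixes k :: nat and s :: "nat \<Rightarrow> nat"
  assumes k: "k \<le> r" and s_inj: "inj_on s {1..k}" and s_range: "s ` {1..k} \<subseteq> {1..n}"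
begin

lemma prefix_in_trunc_bool: "i \<le> k \<Longrightarrow> Some (s ` {1..i}) \<in> B"
  and rk_prefix: "i \<le> k \<Longrightarrow> rk (Some (s ` {1..i})) = i"
proof -
  assume i: "i \<le> k"
  have "card (s ` {1..i}) = i" using card_image[OF inj_on_subset[OF s_inj]] i by auto
  moreover have "s ` {1..i} \<subseteq> {1..n}" using s_range i by auto
  ultimately show "Some (s ` {1..i}) \<in> B" "rk (Some (s ` {1..i})) = i"
    using k i Some_in_trunc_bool_carrier height_trunc_bool_Some by auto
qed

lemma prefix_chain_mem: "prefix_chain k s \<in> rank_chains {1..k}"
proof -
  have inj: "inj_on (\<lambda>i. Some (s ` {1..i})) {1..k}"
    by (rule inj_onI) (metis atLeastAtMost_iff rk_prefix)
  have "rk ` prefix_chain k s = (\<lambda>i. i) ` {1..k}"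
    unfolding prefix_chain_def image_image by (rule image_cong) (metis atLeastAtMost_iff rk_prefix)+
  moreover have "is_chain B trunc_bool_le (prefix_chain k s)"
    unfolding is_chain_def prefix_chain_def
  proof (intro conjI ballI)
    show "(\<lambda>i. Some (s ` {1..i})) ` {1..k} \<subseteq> B" using prefix_in_trunc_bool by auto
    fix x y
    assume "x \<in> (\<lambda>i. Some (s ` {1..i})) ` {1..k}" "y \<in> (\<lambda>i. Some (s ` {1..i})) ` {1..k}"
    then obtain i j where "x = Some (s ` {1..i})" "y = Some (s ` {1..j})" by blast
    thus "trunc_bool_le x y \<or> trunc_bool_le y x"
      using nat_le_linear[of i j] by (auto intro: image_mono)
  qed
  ultimately show ?thesis
    unfolding rank_chains_def using card_image[OF inj] prefix_chain_def by simp
qed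

lemma chain_seq_prefix_chain: "i \<le> k \<Longrightarrow> chain_seq k (prefix_chain k s) i = Some (s ` {1..i})"
proof (cases "i = 0")
  case False
  assume i: "i \<le> k"
  hence "Some (s ` {1..i}) \<in> prefix_chain k s" using False unfolding prefix_chain_def by simp
  from chain_elem_rk[OF prefix_chain_mem this]
  show ?thesis unfolding chain_seq_def using False i rk_prefix[OF i] by simp
qed (simp add: chain_seq_def hat0_trunc_bool)

lemma chain_label_prefix_chain: "1 \<le> i \<Longrightarrow> i \<le> k \<Longrightarrow> chain_label k (prefix_chain k s) i = s i"
proof -
  assume i: "1 \<le> i" "i \<le> k"
  have "s i \<in> s ` {1..i - 1} \<longleftrightarrow> i \<in> {1..i - 1}"
    by (rule inj_on_image_mem_iff[OF s_inj]) (use i in auto)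
  hence "s i \<notin> s ` {1..i - 1}" using i by simp
  moreover have "{1..i} = insert i {1..i - 1}" using i by auto
  ultimately have diff: "s ` {1..i} - s ` {1..i - 1} = {s i}" by auto
  have "atom_labels (chain_seq k (prefix_chain k s) j) = s ` {1..j}" if "j \<le> k" for j
  proof -
    have "s ` {1..j} \<subseteq> {1..n}" using s_range that by auto
    thus ?thesis using chain_seq_prefix_chain[OF that] atom_labels_trunc_bool_Some by simp
  qed
  thus ?thesis unfolding chain_label_def using diff i by simp
qed

lemma chain_label_prefix_chain_Suc:
  "chain_label k (prefix_chain k s) (Suc k) = Min ({1..n} - s ` {1..k})"
  unfolding chain_label_def chain_seq_def[of k _ "Suc k"]
  using chain_seq_prefix_chain[of k] hat1_trunc_bool atom_labels_trunc_bool_None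
    atom_labels_trunc_bool_Some s_range by simp

end

end

lemma flag_h_empty: "flag_h P le {} = 1"
proof -
  have "{C. is_chain P le C \<and> card C = card {} \<and> height P le ` C = {}} = {{}}"
    unfolding is_chain_def by auto
  thus ?thesis unfolding flag_h_def flag_f_def by simp
qed

text \<open>A chain of \<open>L\<close> is sent to the chain of prefix sets of its label word in \<open>B\<close>.\<close>

locale trunc_bool_comparison = L: atom_labelled P le label + B: trunc_bool r n
  for P :: "'a set" and le label r n +
  assumes labels_hat1: "L.atom_labels L.hat1 = {1..n}" and rk_hat1: "L.rk L.hat1 = r + 1"
begin

context
  fixes k :: nat and C :: "'a set"
  assumes k: "k \<le> r" and C: "C \<in> L.rank_chains {1..k}"
begin

lemma chain_label_range: "1 \<le> i \<Longrightarrow> i \<le> Suc k \<Longrightarrow> L.chain_label k C i \<in> {1..n}"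
  using L.chain_label_in_atom_labels_hat1[OF _ C] k rk_hat1 labels_hat1 by simp

lemma inj_on_initial_chain_labels: "inj_on (L.chain_label k C) {1..k}"
proof (rule inj_on_subset)
  show "inj_on (L.chain_label k C) {1..Suc k}" using L.inj_on_chain_label[OF _ C] k rk_hat1 by simp
qed auto

lemma initial_chain_labels_subset: "L.chain_label k C ` {1..k} \<subseteq> {1..n}"
  using chain_label_range by auto

text \<open>The prefix chain ends with the least unused label.\<close>

lemma last_label_prefix_chain_le:
  "B.chain_label k (B.prefix_chain k (L.chain_label k C)) (Suc k) \<le> L.chain_label k C (Suc k)"
proof -
  have "L.chain_label k C (Suc k) \<in> L.chain_label k C ` {1..k} \<longleftrightarrow> Suc k \<in> {1..k}"
    using k rk_hat1 by (intro inj_on_image_mem_iff[OF L.inj_on_chain_label[OF _ C]]) auto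
  hence "L.chain_label k C (Suc k) \<in> {1..n} - L.chain_label k C ` {1..k}"
    using chain_label_range[of "Suc k"] by simp
  thus ?thesis
    unfolding B.chain_label_prefix_chain_Suc[OF k inj_on_initial_chain_labels
        initial_chain_labels_subset]
    by (intro Min_le) auto
qed

lemma descents_prefix_chain:
  assumes "k \<in> L.descents k C"
  shows "B.descents k (B.prefix_chain k (L.chain_label k C)) = L.descents k C"
proof -
  let ?C' = "B.prefix_chain k (L.chain_label k C)"
  note labels = B.chain_label_prefix_chain[OF k inj_on_initial_chain_labels
      initial_chain_labels_subset]
  have "i \<in> B.descents k ?C' \<longleftrightarrow> i \<in> L.descents k C" if i: "1 \<le> i" "i \<le> k" for i
  proof (cases "i = k")
    case True
    thus ?thesis
      using assms labels[of k] last_label_prefix_chain_le i unfolding B.descents_def L.descents_def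
      by auto
  next
    case False
    thus ?thesis using labels[of i] labels[of "Suc i"] i unfolding B.descents_def L.descents_def
      by simp
  qed
  thus ?thesis unfolding B.descents_def L.descents_def by auto
qed

lemma label_word_prefix_chain:
  "B.label_word k (B.prefix_chain k (L.chain_label k C)) = L.label_word k C"
  unfolding B.label_word_def L.label_word_def
  using B.chain_label_prefix_chain[OF k inj_on_initial_chain_labels initial_chain_labels_subset]
  by (intro map_cong) auto

end

lemma label_words_descents_subset:
  assumes k: "k \<le> r" "k \<in> S"
  shows "L.label_word k ` {C \<in> L.rank_chains {1..k}. L.descents k C = S}
    \<subseteq> B.label_word k ` {C \<in> B.rank_chains {1..k}. B.descents k C = S}"
proof
  fix w assume "w \<in> L.label_word k ` {C \<in> L.rank_chains {1..k}. L.descents k C = S}"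
  then obtain C where C: "C \<in> L.rank_chains {1..k}" "L.descents k C = S"
    and w: "w = L.label_word k C" by blast
  let ?C' = "B.prefix_chain k (L.chain_label k C)"
  have "?C' \<in> B.rank_chains {1..k}"
    by (rule B.prefix_chain_mem[OF k(1) inj_on_initial_chain_labels[OF k(1) C(1)]
          initial_chain_labels_subset[OF k(1) C(1)]])
  moreover have "B.descents k ?C' = S" using descents_prefix_chain[OF k(1) C(1)] C(2) k(2) by simp
  moreover have "B.label_word k ?C' = w" using label_word_prefix_chain[OF k(1) C(1)] w by simp
  ultimately show "w \<in> B.label_word k ` {C \<in> B.rank_chains {1..k}. B.descents k C = S}" by blast
qed

lemma card_descents_le:
  assumes "k \<le> r" "k \<in> S"
  shows "card {C \<in> L.rank_chains {1..k}. L.descents k C = S}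
    \<le> card {C \<in> B.rank_chains {1..k}. B.descents k C = S}"
proof -
  let ?XL = "{C \<in> L.rank_chains {1..k}. L.descents k C = S}"
  let ?XB = "{C \<in> B.rank_chains {1..k}. B.descents k C = S}"
  have "k < L.rk L.hat1" using assms rk_hat1 by simp
  hence "inj_on (L.label_word k) ?XL"
    by (rule inj_on_subset[OF L.inj_on_label_word]) blast
  hence "card ?XL = card (L.label_word k ` ?XL)" by (simp add: card_image)
  also have "\<dots> \<le> card (B.label_word k ` ?XB)"
    by (rule card_mono[OF finite_imageI label_words_descents_subset[OF assms]])
      (rule finite_subset[OF _ B.finite_rank_chains], blast)
  also have "\<dots> \<le> card ?XB"
    by (rule card_image_le) (rule finite_subset[OF _ B.finite_rank_chains], blast)
  finally show ?thesis .
qed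

lemma flag_h_le_flag_h_trunc_bool:
  assumes S: "S \<subseteq> {1..r}"
  shows "flag_h P le S \<le> flag_h (trunc_bool_carrier r n) trunc_bool_le S"
proof (cases "S = {}")
  case True
  thus ?thesis by (simp add: flag_h_empty)
next
  case False
  define k where "k = Max S"
  have "finite S" using S finite_subset by blast
  hence k: "k \<in> S" "S \<subseteq> {1..k}" "k \<le> r"
    using False S Max_in Max_ge unfolding k_def by fastforce+
  have "k < L.rk L.hat1" using k rk_hat1 by simp
  hence "flag_h P le S = int (card {C \<in> L.rank_chains {1..k}. L.descents k C = S})"
    using L.flag_h_eq_card_descents k(2) by blast
  moreover have "flag_h (trunc_bool_carrier r n) trunc_bool_le S
      = int (card {C \<in> B.rank_chains {1..k}. B.descents k C = S})"
    using B.flag_h_eq_card_descents[OF _ k(2)] B.hat1_trunc_bool B.height_trunc_bool_None k(3)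
    by simp
  ultimately show ?thesis using card_descents_le[OF k(3,1)] by simp
qed

end

lemma geometric_lattice_imp_atomic_semimodular:
  assumes "geometric_lattice P le"
  shows "atomic_semimodular P le"
proof -
  have graded: "graded_poset P le" and lattice: "is_lattice P le" and atomic: "atomic P le"
    and semimod: "\<And>x y j m. x \<in> P \<Longrightarrow> y \<in> P \<Longrightarrow> is_lub P le {x, y} j \<Longrightarrow> is_glb P le {x, y} m
      \<Longrightarrow> height P le j + height P le m \<le> height P le x + height P le y"
    using assms unfolding geometric_lattice_def by blast+
  have po: "partial_order_on' P le" using graded unfolding graded_poset_def by blast
  show ?thesis
  proof
    show "finite P" "partial_order_on' P le" "\<exists>b\<in>P. \<forall>x\<in>P. le b x" "\<exists>t\<in>P. \<forall>x\<in>P. le x t"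
      using graded unfolding graded_poset_def by blast+
  next
    fix x y assume xy: "x \<in> P" "y \<in> P" "le x y" "x \<noteq> y"
    show "\<exists>a\<in>atoms P le. le a y \<and> \<not> le a x"
    proof (rule ccontr)
      assume "\<not> (\<exists>a\<in>atoms P le. le a y \<and> \<not> le a x)"
      moreover have "is_lub P le {a \<in> atoms P le. le a y} y"
        using atomic xy(2) unfolding atomic_def by blast
      ultimately have "le y x" using xy(1) unfolding is_lub_def by blast
      thus False using partial_order_on'_antisym[OF po] xy by blast
    qed
  next
    fix x a assume xa: "x \<in> P" "a \<in> atoms P le" "\<not> le a x"
    have a: "a \<in> P" "height P le a = 1" using xa(2) unfolding atoms_def by auto
    obtain j m where jm: "is_lub P le {x, a} j" "is_glb P le {x, a} m"
      using lattice xa(1) a(1) unfolding is_lattice_def by blast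
    thus "\<exists>j. is_lub P le {x, a} j \<and> height P le j \<le> height P le x + 1"
      using semimod[OF xa(1) a(1) jm] a(2) by auto
  qed
qed

theorem proposition3p2:
  fixes L :: "'a set" and le :: "'a \<Rightarrow> 'a \<Rightarrow> bool" and r n :: nat and S :: "nat set"
  assumes "geometric_lattice L le"
    and "poset_rank L le = r + 1"
    and "card (atoms L le) = n"
    and "S \<subseteq> {1..r}"
  shows "flag_h L le S \<le> flag_h (trunc_bool_carrier r n) trunc_bool_le S"
proof -
  interpret atomic_semimodular L le
    using assms(1) by (rule geometric_lattice_imp_atomic_semimodular)
  obtain label where label: "bij_betw label (atoms L le) {1..n}"
    using finite_same_card_bij[OF finite_subset[OF atoms_subset finite_carrier], of "{1..n}"]
      assms(3) by auto
  interpret L: atom_labelled L le label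
    by unfold_locales (rule bij_betw_imp_inj_on[OF label])
  have labels: "L.atom_labels hat1 = {1..n}"
    using L.atom_labels_hat1 label bij_betw_imp_surj_on by metis
  have rk: "rk hat1 = r + 1" using assms(2) poset_rank_eq_rk_hat1 by simp
  show ?thesis
  proof (cases "r = 0")
    case True
    thus ?thesis using assms(4) by (simp add: flag_h_empty)
  next
    case False
    interpret trunc_bool_comparison L le label r n
      using L.rk_hat1_le_card_atom_labels labels rk False by unfold_locales auto
    show ?thesis using assms(4) by (rule flag_h_le_flag_h_trunc_bool)
  qed
qed

end
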